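(* For all integers $n\ge2$, $$B_R(n):=\sum_{1<p\le\sqrt n}\frac{n-1}{p-1}d_p(n)\log p\le 4\,n^{3/2},$$ where the sum is over primes $p\le\sqrt n$.
   Context: For a prime $p$, $d_p(n)$ is the sum of the base-$p$ digits of the integer $n$. *)

theory Defs
  imports Complex_Main "HOL-Computational_Algebra.Primes"
begin

fun digit_sum :: "nat \<Rightarrow> nat \<Rightarrow> nat" where
  "digit_sum p n = (if p < 2 \<or> n = 0 then 0 else n mod p + digit_sum p (n div p))"

end

theory Submission
  imports Defs "HOL-Analysis.Harmonic_Numbers"
begin

text \<open>
  Write \<open>n = a p^e + (lower digits)\<close> with \<open>1 \<le> a < p\<close>. Then \<open>d_p(n) \<le> (p - 1) e + a\<close>, and
  since \<open>ln a\<close> lies above its chord between \<open>1\<close> and \<open>p - 1\<close>, every \<open>p \<ge> 2\<close> satisfies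
  \<open>d_p(n) ln p / (p - 1) \<le> ln n + ln 2\<close>. With \<open>x = sqrt n\<close> this gives
  \<open>B_R(n) \<le> (n - 1) pi(x) ln (2 x^2)\<close>, and it remains to show \<open>pi(x) ln (2 x^2) \<le> 4 x\<close>.
  Split \<open>ln (2 x^2) = 2 ln p + ln (2 x^2 / p^2)\<close> for each prime \<open>p \<le> x\<close>. The first parts
  sum to \<open>2 theta(x) \<le> 2 (x - 1) ln 4\<close> by Chebyshev's bound \<open>\<Prod>p \<le> N. p \<le> 4^(N-1)\<close>, which
  comes from the primes in \<open>(k + 1, 2k + 1]\<close> dividing \<open>(2k+1 choose k)\<close>. For the second parts,
  the primes above 5 lie in the residue classes 1 and 5 mod 6, and along each class the
  decreasing function \<open>t \<mapsto> ln (2 x^2 / t^2)\<close> sums to at most a sixth of its integral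
  \<open>x (2 + ln 2)\<close> over \<open>[0, x]\<close>.
\<close>

lemma digit_sum_le:
  assumes "2 \<le> p" "n < p ^ Suc e"
  shows "digit_sum p n \<le> (p - 1) * e + n div p ^ e"
  using assms(2)
proof (induction e arbitrary: n)
  case 0
  then show ?case by (subst digit_sum.simps) auto
next
  case (Suc e)
  show ?case
  proof (cases "n = 0")
    case False
    have "n div p < p ^ Suc e"
      using Suc.prems assms(1) by (simp add: div_less_iff_less_mult mult.commute)
    then have IH: "digit_sum p (n div p) \<le> (p - 1) * e + n div p ^ Suc e"
      using Suc.IH by (simp add: div_mult2_eq)
    have "n mod p \<le> p - 1"
      using mod_less_divisor[of p n] assms(1) by linarith
    moreover have "digit_sum p n = n mod p + digit_sum p (n div p)"
      using False assms(1) by (subst digit_sum.simps) auto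
    ultimately show ?thesis using IH by simp
  qed simp
qed

lemma ln_ge_chord:
  fixes a q :: real
  assumes "1 \<le> a" "a \<le> q" "1 < q"
  shows "(a - 1) / (q - 1) * ln q \<le> ln a"
proof -
  define v where "v = (a - 1) / (q - 1)"
  have v: "0 \<le> v" "v \<le> 1" using assms by (auto simp: v_def divide_simps)
  have "\<forall>x\<in>{0<..}. \<forall>y\<in>{0<..}. \<forall>u\<ge>0. \<forall>v\<ge>0. u + v = 1 \<longrightarrow>
      u * ln x + v * ln y \<le> ln (u * x + v * (y::real))"
    using ln_concave unfolding concave_on_iff by simp
  from this[rule_format, of 1 q "1 - v" v] have "(1 - v) * ln 1 + v * ln q \<le> ln ((1 - v) * 1 + v * q)"
    using v assms by simp
  moreover have "(1 - v) * 1 + v * q = a"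
    using assms by (simp add: v_def divide_simps) (simp add: algebra_simps)
  ultimately show ?thesis by (simp add: v_def)
qed

text \<open>The left-hand side is linear in \<open>a\<close> and \<open>ln a\<close> lies above its chord, so it suffices to
  check the endpoints \<open>a = 1\<close> (where \<open>p \<le> 2^(p-1)\<close>) and \<open>a = p - 1\<close> (where \<open>p \<le> 2 (p - 1)\<close>).\<close>
lemma leading_digit_ln_le:
  fixes a p :: nat
  assumes "2 \<le> p" "1 \<le> a" "a < p"
  shows "real a * ln p / (real p - 1) \<le> ln a + ln 2"
proof (cases "p = 2")
  case False
  define q where "q = real p - 1"
  define v where "v = (real a - 1) / (q - 1)"
  have q: "2 \<le> q" "real a \<le> q" using assms False by (auto simp: q_def)
  have v: "0 \<le> v" "v \<le> 1" using q assms by (auto simp: v_def divide_simps)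
  have "p - 1 < 2 ^ (p - 1)" by (rule less_exp)
  then have "p \<le> 2 ^ (p - 1)" by linarith
  then have "real p \<le> 2 ^ (p - 1)" by (metis of_nat_le_iff of_nat_numeral of_nat_power)
  then have "ln p \<le> ln (2 ^ (p - 1))" using assms(1) by simp
  then have at_one: "ln p \<le> q * ln 2"
    using assms(1) by (simp add: q_def ln_realpow of_nat_diff)
  have "real p \<le> 2 * q" using q by (simp add: q_def)
  then have "ln p \<le> ln (2 * q)" using assms(1) by (subst ln_le_cancel_iff) auto
  then have at_top: "ln p \<le> ln q + ln 2" using q by (simp add: ln_mult)
  have chord: "v * ln q \<le> ln a"
    using ln_ge_chord[of a q] assms q by (simp add: v_def)
  have a_eq: "real a = 1 + v * (q - 1)" using q by (simp add: v_def)
  have "real a * ln p / q = (1 - v) * (ln p / q) + v * ln p"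
    unfolding a_eq using q by (simp add: field_simps)
  also have "\<dots> \<le> (1 - v) * ln 2 + v * (ln q + ln 2)"
    using at_one at_top v q by (intro add_mono mult_left_mono) (auto simp: field_simps)
  finally show ?thesis using chord by (simp add: q_def algebra_simps)
next
  case True
  then have "a = 1" using assms by simp
  then show ?thesis using True by simp
qed

lemma digit_sum_mult_ln_le:
  assumes "2 \<le> p" "1 \<le> n"
  shows "real (digit_sum p n) * ln p / (real p - 1) \<le> ln n + ln 2"
proof -
  obtain e where e: "p ^ e \<le> n" "n < p ^ Suc e"
    using ex_power_ivl1[OF assms] by auto
  define a where "a = n div p ^ e"
  have "1 \<le> a" using e(1) div_le_mono[OF e(1), of "p ^ e"] assms(1) by (simp add: a_def)
  moreover have "a < p"
    using e assms(1) by (simp add: a_def div_less_iff_less_mult mult.commute)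
  ultimately have leading: "real a * ln p / (real p - 1) \<le> ln a + ln 2"
    by (rule leading_digit_ln_le[OF assms(1)])
  have "a * p ^ e \<le> n" by (simp add: a_def)
  then have "real a * real p ^ e \<le> real n"
    using of_nat_le_iff[of "a * p ^ e" n] by simp
  then have "ln (real a * real p ^ e) \<le> ln n"
    using \<open>1 \<le> a\<close> assms by (subst ln_le_cancel_iff) auto
  then have top: "ln a + e * ln p \<le> ln n"
    using \<open>1 \<le> a\<close> assms by (simp add: ln_mult ln_realpow)
  have "digit_sum p n \<le> (p - 1) * e + a"
    using digit_sum_le[OF assms(1) e(2)] by (simp add: a_def)
  then have "real (digit_sum p n) \<le> real ((p - 1) * e + a)"
    by (simp only: of_nat_le_iff)
  also have "\<dots> = (real p - 1) * e + a"
    using assms(1) by (simp add: of_nat_diff)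
  finally have "real (digit_sum p n) \<le> (real p - 1) * e + a" .
  then have "real (digit_sum p n) * ln p / (real p - 1) \<le> ((real p - 1) * e + a) * ln p / (real p - 1)"
    using assms(1) by (intro divide_right_mono mult_right_mono) auto
  also have "\<dots> = e * ln p + real a * ln p / (real p - 1)"
    using assms(1) by (simp add: field_simps)
  finally show ?thesis using leading top by linarith
qed

lemma prod_primes_dvd:
  fixes A :: "nat set"
  assumes "finite A" "\<And>p. p \<in> A \<Longrightarrow> prime p" "\<And>p. p \<in> A \<Longrightarrow> p dvd c"
  shows "\<Prod>A dvd c"
  using assms
proof (induction A rule: finite_induct)
  case (insert p A)
  have "coprime p (\<Prod>A)"
    using insert by (auto intro!: prod_coprime_right primes_coprime)
  then show ?case using insert by (simp add: divides_mult)
qed simp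

lemma binomial_odd_le_four_pow: "(2 * k + 1 choose k) \<le> 4 ^ k"
proof -
  have "(2 * k + 1 choose k) + (2 * k + 1 choose Suc k) = (\<Sum>i\<in>{k, Suc k}. 2 * k + 1 choose i)"
    by simp
  also have "\<dots> \<le> (\<Sum>i\<le>2 * k + 1. 2 * k + 1 choose i)"
    by (intro sum_mono2) auto
  also have "\<dots> = 2 ^ (2 * k + 1)" by (rule choose_row_sum)
  also have "\<dots> = 2 * 4 ^ k" by (simp add: power_mult)
  finally show ?thesis using central_binomial_odd[of "2 * k + 1"] by simp
qed

lemma prime_dvd_binomial_odd:
  assumes "prime p" "k + 1 < p" "p \<le> 2 * k + 1"
  shows "p dvd (2 * k + 1 choose k)"
proof -
  have "fact (2 * k + 1) = (2 * k + 1 choose k) * (fact k * fact (k + 1))"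
    using binomial_fact_lemma[of k "2 * k + 1"] by (simp add: algebra_simps)
  moreover have "p dvd fact (2 * k + 1)" "\<not> p dvd fact k" "\<not> p dvd fact (k + 1)"
    using assms by (simp_all add: prime_dvd_fact_iff del: fact_Suc)
  ultimately show ?thesis using assms(1) by (metis prime_dvd_mult_iff)
qed

lemma prod_primes_le_four_pow:
  assumes "1 \<le> n"
  shows "\<Prod>{p. prime p \<and> p \<le> n} \<le> (4::nat) ^ (n - 1)"
  using assms
proof (induction n rule: less_induct)
  case (less n)
  consider (le_2) "n \<le> 2" | (even) "even n" "2 < n" | (odd) k where "n = 2 * k + 1" "1 \<le> k"
    by (cases "n \<le> 2"; cases "even n") (auto elim!: oddE)
  then show ?case
  proof cases
    case le_2
    then have "{p. prime p \<and> p \<le> n} = (if n = 1 then {} else {2})"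
      using less.prems two_is_prime_nat by (auto simp: le_Suc_eq dest: prime_gt_1_nat)
    then show ?thesis using less.prems le_2 by (auto simp: le_Suc_eq numeral_2_eq_2)
  next
    case even
    then have "{p. prime p \<and> p \<le> n} = {p. prime p \<and> p \<le> n - 1}"
      using prime_odd_nat by (auto simp: le_less)
    also have "\<Prod>\<dots> \<le> 4 ^ (n - 1 - 1)"
      using less.IH[of "n - 1"] even by simp
    also have "\<dots> \<le> 4 ^ (n - 1)"
      by (rule power_increasing) auto
    finally show ?thesis .
  next
    case odd
    define small where "small = {p. prime p \<and> p \<le> k + 1}"
    define large where "large = {p. prime p \<and> k + 1 < p \<and> p \<le> n}"
    have "\<Prod>large dvd (2 * k + 1 choose k)"
      using odd by (intro prod_primes_dvd) (auto simp: large_def intro: prime_dvd_binomial_odd[simplified])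
    then have "\<Prod>large \<le> (2 * k + 1 choose k)"
      by (rule dvd_imp_le) simp
    then have "\<Prod>large \<le> 4 ^ k"
      using binomial_odd_le_four_pow[of k] by linarith
    moreover have "\<Prod>small \<le> 4 ^ k"
      using less.IH[of "k + 1"] odd by (simp add: small_def)
    ultimately have "\<Prod>small * \<Prod>large \<le> 4 ^ k * 4 ^ k"
      by (simp add: mult_le_mono)
    moreover have "{p. prime p \<and> p \<le> n} = small \<union> large" "small \<inter> large = {}"
      using odd by (auto simp: small_def large_def)
    ultimately show ?thesis
      using odd by (simp add: prod.union_disjoint small_def large_def mult_2 flip: power_add)
  qed
qed

lemma sum_ln_primes_le:
  fixes x :: real
  assumes "1 \<le> x"
  shows "(\<Sum>p | prime p \<and> real p \<le> x. ln p) \<le> (x - 1) * ln 4"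
proof -
  define N where "N = nat \<lfloor>x\<rfloor>"
  have N: "1 \<le> N" "real N \<le> x" using assms by (auto simp: N_def le_nat_floor)
  have primes_eq: "{p. prime p \<and> real p \<le> x} = {p. prime p \<and> p \<le> N}"
    using assms by (auto simp: N_def le_nat_floor le_nat_iff le_floor_iff)
  have "(\<Sum>p | prime p \<and> p \<le> N. ln (real p)) = ln (\<Prod>p | prime p \<and> p \<le> N. real p)"
    by (subst ln_prod) (auto simp: prime_gt_0_nat)
  also have "\<dots> = ln (real (\<Prod>{p. prime p \<and> p \<le> N}))"
    by simp
  also have "\<dots> \<le> ln (real (4 ^ (N - 1)))"
    using prod_primes_le_four_pow[OF N(1)]
    by (subst ln_le_cancel_iff) (auto simp: prime_gt_0_nat prod_pos simp del: of_nat_prod)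
  also have "\<dots> = real (N - 1) * ln 4" by (simp add: ln_realpow)
  also have "\<dots> \<le> (x - 1) * ln 4" using N by (intro mult_right_mono) (auto simp: of_nat_diff)
  finally show ?thesis unfolding primes_eq .
qed

lemma prime_mod_6_cases:
  fixes p :: nat
  assumes "prime p" "p \<noteq> 2" "p \<noteq> 3"
  shows "p mod 6 = 1 \<or> p mod 6 = 5"
proof -
  have "\<not> 2 dvd p" "\<not> 3 dvd p"
    using assms primes_dvd_imp_eq[of 2 p] primes_dvd_imp_eq[of 3 p] by auto
  then show ?thesis by presburger
qed

lemma progression_eq_image:
  fixes x :: real and d r :: nat
  assumes "r < d" "real r \<le> x"
  shows "{t. r < t \<and> real t \<le> x \<and> t mod d = r} = (\<lambda>j. r + d * j) ` {1..nat \<lfloor>(x - r) / d\<rfloor>}"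
    (is "_ = ?g ` {1..?N}")
proof (intro antisym subsetI)
  fix t assume t: "t \<in> {t. r < t \<and> real t \<le> x \<and> t mod d = r}"
  define k where "k = t div d"
  have t_eq: "t = ?g k" using t mult_div_mod_eq[of d t] by (simp add: k_def)
  have "d \<le> t"
  proof (rule ccontr)
    assume "\<not> d \<le> t"
    then have "t mod d = t" by simp
    with t show False by auto
  qed
  then have "1 \<le> k" using div_le_mono[OF \<open>d \<le> t\<close>, of d] assms(1) by (simp add: k_def)
  have "real (?g k) \<le> x" using t unfolding t_eq by simp
  then have "real k \<le> (x - r) / d" using assms(1) by (simp add: field_simps)
  then have "k \<le> ?N" by (rule le_nat_floor)
  then show "t \<in> ?g ` {1..?N}" using \<open>1 \<le> k\<close> unfolding t_eq by (intro imageI) simp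
next
  fix t assume "t \<in> ?g ` {1..?N}"
  then obtain j where j: "1 \<le> j" "j \<le> ?N" and t_eq: "t = ?g j" by auto
  have "real ?N \<le> (x - r) / d" using assms(2) by simp
  then have "real j \<le> (x - r) / d" using j(2) of_nat_le_iff[of j ?N] by linarith
  then have "real (?g j) \<le> x" using assms(1) by (simp add: field_simps)
  then show "t \<in> {t. r < t \<and> real t \<le> x \<and> t mod d = r}"
    using j t_eq assms(1) by simp
qed

text \<open>The hypothesis \<open>slope\<close> holds when \<open>f\<close> is decreasing with \<open>F' = f\<close>; the sum is then a
  right Riemann sum of \<open>f\<close> with mesh \<open>d\<close>.\<close>
lemma sum_progression_le:
  fixes f F :: "real \<Rightarrow> real" and d r :: nat and x :: real
  assumes "r < d" "real r \<le> x" "0 \<le> f x"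
    and slope: "\<And>u t. real r \<le> u \<Longrightarrow> u \<le> t \<Longrightarrow> t \<le> x \<Longrightarrow> (t - u) * f t \<le> F t - F u"
  shows "real d * (\<Sum>t | r < t \<and> real t \<le> x \<and> t mod d = r. f (real t)) \<le> F x - F r"
proof -
  define N where "N = nat \<lfloor>(x - r) / d\<rfloor>"
  define g where "g j = r + d * j" for j
  have d: "0 < d" using assms(1) by simp
  have "real N \<le> (x - r) / d" using assms(2) by (simp add: N_def)
  then have g_N: "real (g N) \<le> x" using d by (simp add: g_def field_simps)
  have telescope: "real d * (\<Sum>j\<in>{1..k}. f (g j)) \<le> F (g k) - F r" if "k \<le> N" for k
    using that
  proof (induction k)
    case (Suc k)
    have "g (Suc k) \<le> g N" using Suc.prems by (simp add: g_def del: mult_Suc_right)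
    then have "real (g (Suc k)) \<le> x" using g_N of_nat_le_iff[of "g (Suc k)" "g N"] by linarith
    then have "(real (g (Suc k)) - real (g k)) * f (g (Suc k)) \<le> F (g (Suc k)) - F (g k)"
      by (intro slope) (auto simp: g_def)
    then show ?case using Suc by (simp add: g_def algebra_simps)
  qed (simp add: g_def)
  have "{t. r < t \<and> real t \<le> x \<and> t mod d = r} = g ` {1..N}"
    using progression_eq_image[OF assms(1,2)] unfolding g_def N_def .
  moreover have "inj_on g {1..N}" using d by (simp add: g_def inj_on_def)
  ultimately have "real d * (\<Sum>t | r < t \<and> real t \<le> x \<and> t mod d = r. f (real t))
      = real d * (\<Sum>j\<in>{1..N}. f (g j))"
    by (simp add: sum.reindex)
  also have "\<dots> \<le> F (g N) - F r" by (rule telescope) simp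
  also have "\<dots> \<le> F x - F r"
  proof -
    have "0 \<le> (x - g N) * f x" using g_N assms(3) by simp
    also have "\<dots> \<le> F x - F (g N)" using g_N by (intro slope) (auto simp: g_def)
    finally show ?thesis by simp
  qed
  finally show ?thesis .
qed

lemma sum_primes_ln_ratio_le:
  fixes x :: real
  assumes "5 \<le> x"
  shows "(\<Sum>p | prime p \<and> real p \<le> x. 2 * ln (x / p) + ln 2)
    \<le> x * (2 + ln 2) / 3 + 4 * ln x - 2 - 2 * ln 3"
proof -
  define w where "w t = 2 * ln (x / t) + ln 2" for t
  define W where "W s = s * (2 * ln (x / s) + 2 + ln 2)" for s
    \<comment> \<open>an antiderivative of the decreasing function \<open>w\<close>\<close>
  define C where "C r = {t. r < t \<and> real t \<le> x \<and> t mod 6 = r}" for r :: nat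
  have w_nonneg: "0 \<le> w t" if "0 < t" "t \<le> x" for t
    using that by (simp add: w_def)
  have W_slope: "(t - u) * w t \<le> W t - W u" if "0 < u" "u \<le> t" for u t
  proof -
    have "ln (t / u) \<le> t / u - 1" using that by (intro ln_le_minus_one) auto
    then have "u * (ln t - ln u) \<le> t - u" using that by (simp add: ln_div field_simps)
    then show ?thesis using that assms by (simp add: w_def W_def ln_div algebra_simps)
  qed
  have finite_le: "finite {t::nat. real t \<le> x}"
    by (rule finite_subset[of _ "{..nat \<lfloor>x\<rfloor>}"]) (auto intro: le_nat_floor)
  have class_1: "6 * (\<Sum>t\<in>C 1. w t) \<le> W x - W 1"
    using sum_progression_le[of 1 6 x w W] assms w_nonneg W_slope by (auto simp: C_def)
  have class_5: "6 * (\<Sum>t\<in>C 5. w t) \<le> W x - W 5"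
    using sum_progression_le[of 5 6 x w W] assms w_nonneg W_slope by (auto simp: C_def)
  have "p \<in> {2, 3, 5} \<union> C 1 \<union> C 5" if p: "prime p" "real p \<le> x" for p
  proof -
    have "1 < p" using prime_gt_1_nat[OF p(1)] .
    consider "p = 2" | "p = 3" | "p mod 6 = 1" | (mod_5) "p mod 6 = 5"
      using prime_mod_6_cases[OF p(1)] by blast
    then show ?thesis
    proof cases
      case mod_5
      then have "p = 5 \<or> 5 < p" using \<open>1 < p\<close> by presburger
      then show ?thesis using mod_5 p by (auto simp: C_def)
    qed (use \<open>1 < p\<close> p in \<open>auto simp: C_def\<close>)
  qed
  then have "{p. prime p \<and> real p \<le> x} \<subseteq> {2, 3, 5} \<union> C 1 \<union> C 5"
    by blast
  moreover have "finite ({2, 3, 5} \<union> C 1 \<union> C 5)"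
    unfolding C_def by (auto intro: finite_subset[OF _ finite_le])
  ultimately have "(\<Sum>p | prime p \<and> real p \<le> x. w p) \<le> (\<Sum>t\<in>{2, 3, 5} \<union> C 1 \<union> C 5. w t)"
    using assms by (intro sum_mono2) (auto simp: C_def intro!: w_nonneg)
  also have "\<dots> = w 2 + w 3 + w 5 + (\<Sum>t\<in>C 1. w t) + (\<Sum>t\<in>C 5. w t)"
    using finite_le by (subst sum.union_disjoint; auto simp: C_def intro: finite_subset[OF _ finite_le])+
  also have "\<dots> \<le> w 2 + w 3 + w 5 + (W x - W 1) / 6 + (W x - W 5) / 6"
    using class_1 class_5 by (simp add: field_simps)
  also have "\<dots> = x * (2 + ln 2) / 3 + 4 * ln x - 2 - 2 * ln 3 - ln 5 / 3"
    using assms by (simp add: w_def W_def ln_div field_simps)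
  also have "\<dots> \<le> x * (2 + ln 2) / 3 + 4 * ln x - 2 - 2 * ln 3"
    by simp
  finally show ?thesis by (simp add: w_def)
qed

lemma card_primes_less_5:
  fixes x :: real
  assumes "x < 5"
  shows "card {p. prime p \<and> real p \<le> x} \<le> 2"
proof -
  have "p \<in> {2, 3}" if p: "prime p" "real p \<le> x" for p
  proof -
    have "1 < p" "p < 5" "p \<noteq> 4" using p assms prime_gt_1_nat prime_odd_nat[of 4] by auto
    then show ?thesis by auto
  qed
  then have "card {p. prime p \<and> real p \<le> x} \<le> card {2, 3 :: nat}"
    by (intro card_mono) auto
  then show ?thesis by simp
qed

lemma card_primes_mult_ln_le:
  fixes x :: real
  assumes "1 \<le> x"
  shows "real (card {p. prime p \<and> real p \<le> x}) * (2 * ln x + ln 2) \<le> 4 * x"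
proof (cases "x < 5")
  case True
  then have "card {p. prime p \<and> real p \<le> x} \<le> 2"
    by (rule card_primes_less_5)
  moreover have "0 \<le> 2 * ln x + ln 2" using assms by simp
  ultimately have "real (card {p. prime p \<and> real p \<le> x}) * (2 * ln x + ln 2) \<le> 2 * (2 * ln x + ln 2)"
    by (intro mult_right_mono) auto
  also have "\<dots> \<le> 4 * x"
    using ln_le_minus_one[of x] ln_2_less_1 assms by simp
  finally show ?thesis .
next
  case False
  have "real (card {p. prime p \<and> real p \<le> x}) * (2 * ln x + ln 2)
      = (\<Sum>p | prime p \<and> real p \<le> x. 2 * ln p + (2 * ln (x / p) + ln 2))"
    using assms by (simp add: ln_div prime_gt_0_nat)
  also have "\<dots> = 2 * (\<Sum>p | prime p \<and> real p \<le> x. ln p)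
      + (\<Sum>p | prime p \<and> real p \<le> x. 2 * ln (x / p) + ln 2)"
    by (simp add: sum.distrib sum_distrib_left)
  also have "\<dots> \<le> 2 * ((x - 1) * ln 4) + (x * (2 + ln 2) / 3 + 4 * ln x - 2 - 2 * ln 3)"
    using sum_ln_primes_le[OF assms] sum_primes_ln_ratio_le False by (intro add_mono) auto
  also have "\<dots> \<le> 4 * x"
  proof -
    have ln_4: "ln (4::real) = 2 * ln 2" using ln_realpow[of 2 2] by simp
    have ln_3: "ln (3::real) \<le> 2 * ln 2"
      using ln_le_cancel_iff[of 3 4] ln_4 by simp
    \<comment> \<open>The tangent of \<open>ln\<close> at 13; with \<open>ln 2 \<le> 25/36\<close> the coefficient of \<open>x\<close> below is 3.984.\<close>
    have ln_x: "ln x \<le> x / 13 - 11 / 12 + 2 * ln 2 + ln 3"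
    proof -
      have "ln (x / 13) \<le> x / 13 - 1" "ln ((13::real) / 12) \<le> 13 / 12 - 1"
        using False by (intro ln_le_minus_one; simp)+
      moreover have "ln x = ln (x / 13) + ln (13 / 12) + ln (4 * 3)"
        using False by (simp add: ln_div)
      ultimately show ?thesis using ln_mult[of 4 3] ln_4 by simp
    qed
    have "x * ln 2 \<le> 25 / 36 * x"
      using ln2_le_25_over_36 False by (simp add: mult.commute mult_left_mono)
    moreover have "2 * ((x - 1) * ln 4) = 4 * (x * ln 2) - 4 * ln 2"
      "x * (2 + ln 2) / 3 = 2 * x / 3 + x * ln 2 / 3"
      by (simp_all add: ln_4 algebra_simps add_divide_distrib)
    ultimately show ?thesis using ln_3 ln_x ln2_le_25_over_36 False by linarith
  qed
  finally show ?thesis .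
qed

theorem lemma2p1:
  fixes n :: nat
  assumes "n \<ge> 2"
  shows "(\<Sum>p\<in>{p. prime p \<and> real p \<le> sqrt (real n)}.
            (real n - 1) / (real p - 1) * real (digit_sum p n) * ln (real p))
         \<le> 4 * real n powr (3/2)"
proof -
  define x where "x = sqrt (real n)"
  have x: "1 \<le> x" "ln n = 2 * ln x" "real n powr (3/2) = real n * x"
    using assms powr_add[of "real n" 1 "1/2"] by (simp_all add: x_def ln_sqrt powr_half_sqrt)
  have term_le: "(real n - 1) / (real p - 1) * real (digit_sum p n) * ln p
      \<le> (real n - 1) * (2 * ln x + ln 2)" if "prime p" for p
    using mult_left_mono[OF digit_sum_mult_ln_le[of p n], of "real n - 1"] prime_ge_2_nat[OF that]
      assms x(2) by simp
  have "(\<Sum>p | prime p \<and> real p \<le> x. (real n - 1) / (real p - 1) * real (digit_sum p n) * ln p)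
      \<le> real (card {p. prime p \<and> real p \<le> x}) * ((real n - 1) * (2 * ln x + ln 2))"
    by (rule sum_bounded_above) (use term_le in blast)
  also have "\<dots> = (real n - 1) * (real (card {p. prime p \<and> real p \<le> x}) * (2 * ln x + ln 2))"
    by (rule mult.left_commute)
  also have "\<dots> \<le> (real n - 1) * (4 * x)"
    using card_primes_mult_ln_le[OF x(1)] assms by (intro mult_left_mono) auto
  also have "\<dots> \<le> 4 * real n powr (3/2)"
    using x(1,3) by simp
  finally show ?thesis unfolding x_def .
qed

end
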